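(* Let $c>0$ and let $\nu,\tilde\nu$ be probability measures on $\mathbb R_+$ different from $\boldsymbol d_0$, and assume that at least one of $\nu,\tilde\nu$ is not a Dirac (point mass) measure. Let $(\boldsymbol{\tilde\delta}_a,a)$ with $\boldsymbol{\tilde\delta}_a\in\widetilde{\mathcal D}$, $a\neq0$, and $\boldsymbol\delta_a:=c\int\frac{t}{-a(1+\boldsymbol{\tilde\delta}_a t)}\nu(dt)\in\mathcal D$, satisfy $$\boldsymbol F(\boldsymbol{\tilde\delta}_a,a)=0,\qquad\frac{\partial\boldsymbol F}{\partial\boldsymbol{\tilde\delta}}(\boldsymbol{\tilde\delta}_a,a)=0,$$ where $\boldsymbol F(\tilde\delta,x)=\int\frac{t}{-x+ct\int\frac{u}{1+u\tilde\delta}\nu(du)}\tilde\nu(dt)-\tilde\delta$ for real $(\tilde\delta,x)$ near $(\boldsymbol{\tilde\delta}_a,a)$. Then $$\frac{\partial^2\boldsymbol F}{\partial\boldsymbol{\tilde\delta}^2}(\boldsymbol{\tilde\delta}_a,a)=0\ \Longrightarrow\ \frac{\partial^3\boldsymbol F}{\partial\boldsymbol{\tilde\delta}^3}(\boldsymbol{\tilde\delta}_a,a)\neq0.$$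
   Context: $\boldsymbol d_0$ is the Dirac mass at $0$. Define $\mathcal D=\{0\}\cup\{\boldsymbol\delta\in\mathbb R\setminus\{0\}:-\boldsymbol\delta^{-1}\notin\operatorname{supp}(\tilde\nu)\}$ if $\operatorname{supp}(\tilde\nu)$ is compact and $\mathcal D=\{\boldsymbol\delta\in\mathbb R\setminus\{0\}:-\boldsymbol\delta^{-1}\notin\operatorname{supp}(\tilde\nu)\}$ otherwise; $\widetilde{\mathcal D}$ is defined in the same way with $\nu$ in place of $\tilde\nu$. These conditions ensure $\boldsymbol F$ is well defined and smooth near $(\boldsymbol{\tilde\delta}_a,a)$, with differentiation under the integral allowed. *)

theory Defs
  imports "HOL-Probability.Probability"
begin

definition msupp :: "real measure \<Rightarrow> real set" where
  "msupp M = {x. \<forall>e>0. emeasure M (ball x e) > 0}"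

text \<open>The domain D associated with a measure M (D uses nu-tilde, D-tilde uses nu).\<close>
definition Dset :: "real measure \<Rightarrow> real set" where
  "Dset M = (if compact (msupp M)
             then {0} \<union> {d. d \<noteq> 0 \<and> - inverse d \<notin> msupp M}
             else {d. d \<noteq> 0 \<and> - inverse d \<notin> msupp M})"

definition Fmap :: "real \<Rightarrow> real measure \<Rightarrow> real measure \<Rightarrow> real \<Rightarrow> real \<Rightarrow> real" where
  "Fmap c nu nt dt x =
     (\<integral>t. t / (- x + c * t * (\<integral>u. u / (1 + u * dt) \<partial>nu)) \<partial>nt) - dt"

definition prob_Rplus :: "real measure \<Rightarrow> bool" where
  "prob_Rplus M \<longleftrightarrow> prob_space M \<and> sets M = sets borel \<and> (AE t in M. 0 \<le> t)"

end

theory Submission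
  imports Defs
begin

(* Write Q k d = \<integral> (u / (1 + d u))^k d\<nu> and P k s = \<integral> (t / (-a + s t))^k d\<nu>~. Membership in the
   domains D keeps these integrands bounded near the relevant points, so one may differentiate under
   the integral: Q k' = -k Q (k+1), P k' = -k P (k+1), and F d = P 1 (c Q 1 d) - d. At the point,
   F = 0 and F' = 0 say P 1 = d and c P 2 Q 2 = 1, while F''' = 6 c (c^2 P 4 Q 2^3 - 2 c P 3 Q 2 Q 3
   + P 2 Q 4). Multiplied by Q 2^2, the bracket equals
     Q 2 \<integral> y^2 (c Q 2^2 y - Q 3)^2 d\<nu>~ + P 2 \<integral> x^2 (Q 2 x - Q 3)^2 d\<nu>,
   with y = t / (-a + s t) and x = u / (1 + d u), a sum of two nonnegative terms. So F''' = 0 makes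
   both integrals vanish: the first forces Q 2 = d Q 3, and then the second forces x = 0 \<nu>-a.e.,
   i.e. Q 2 = 0, contradicting c P 2 Q 2 = 1. *)

section \<open>Resolvent moments and their derivatives\<close>

lemma DERIV_of_quadratic_remainder:
  fixes f :: "real \<Rightarrow> real"
  assumes "\<delta> > 0" and "\<And>h. \<bar>h\<bar> < \<delta> \<Longrightarrow> \<bar>f (x + h) - f x - h * D\<bar> \<le> K * h\<^sup>2"
  shows "(f has_real_derivative D) (at x)"
proof -
  have "eventually (\<lambda>h. norm ((f (x + h) - f x) / h - D) \<le> K * \<bar>h\<bar>) (at 0)"
    unfolding eventually_at
  proof (intro exI[of _ \<delta>] conjI ballI impI)
    fix h :: real
    assume h: "h \<noteq> 0 \<and> dist h 0 < \<delta>"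
    then have "\<bar>(f (x + h) - f x - h * D) / h\<bar> \<le> K * h\<^sup>2 / \<bar>h\<bar>"
      using assms(2)[of h] by (simp add: abs_divide divide_right_mono)
    also have "K * h\<^sup>2 / \<bar>h\<bar> = K * \<bar>h\<bar>"
      using h by (simp add: power2_eq_square divide_simps)
    finally show "norm ((f (x + h) - f x) / h - D) \<le> K * \<bar>h\<bar>"
      using h by (simp add: diff_divide_distrib)
  qed (use assms(1) in simp)
  moreover have "((\<lambda>h. K * \<bar>h\<bar>) \<longlongrightarrow> 0) (at (0::real))"
    by (intro tendsto_mult_right_zero tendsto_rabs_zero tendsto_ident_at)
  ultimately have "((\<lambda>h. (f (x + h) - f x) / h - D) \<longlongrightarrow> 0) (at 0)"
    by (rule Lim_null_comparison)
  then show ?thesis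
    by (simp add: DERIV_def Lim_null[symmetric])
qed

lemma inverse_power_one_plus_remainder:
  fixes w :: real
  assumes "\<bar>w\<bar> \<le> 1/2"
  shows "\<bar>1 / (1 + w) ^ k - 1 + k * w\<bar> \<le> 4 ^ k * w\<^sup>2"
proof (induction k)
  case (Suc k)
  have ge_half: "1 + w \<ge> 1/2"
    using assms by linarith
  then have pos: "1 + w > 0"
    by linarith
  have "1 / (1 + w) ^ Suc k - 1 + Suc k * w = (1 / (1 + w) ^ k - 1 + k * w + Suc k * w\<^sup>2) / (1 + w)"
  proof -
    have "1 + w \<noteq> 0" "(1 + w) ^ k \<noteq> 0"
      using pos by auto
    then show ?thesis
      by (simp add: divide_simps) (simp add: algebra_simps power2_eq_square)
  qed
  also have "\<bar>\<dots>\<bar> \<le> 2 * (4 ^ k * w\<^sup>2 + Suc k * w\<^sup>2)"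
  proof -
    have divide: "\<bar>N / (1 + w)\<bar> \<le> 2 * Y" if "\<bar>N\<bar> \<le> Y" for N Y :: real
    proof -
      have "0 \<le> Y"
        using that abs_ge_zero[of N] by linarith
      then have "\<bar>N\<bar> \<le> 2 * Y * (1 + w)"
        using that ge_half mult_left_mono[of 1 "2 * (1 + w)" Y] by (simp add: mult_ac)
      then show ?thesis
        unfolding abs_divide abs_of_pos[OF pos] by (rule pos_divide_le_eq[OF pos, THEN iffD2])
    qed
    show ?thesis
      by (rule divide)
        (use Suc.IH abs_triangle_ineq[of "1 / (1 + w) ^ k - 1 + k * w" "Suc k * w\<^sup>2"] in simp)
  qed
  also have "\<dots> \<le> 4 ^ Suc k * w\<^sup>2"
  proof -
    have "Suc k \<le> 2 ^ k"
      using less_exp[of k] by (simp add: Suc_le_eq)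
    then have "real (Suc k) \<le> 2 ^ k"
      by (metis of_nat_le_iff of_nat_numeral of_nat_power)
    also have "(2::real) ^ k \<le> 4 ^ k"
      by (rule power_mono) simp_all
    finally have "Suc k * w\<^sup>2 \<le> 4 ^ k * w\<^sup>2"
      by (rule mult_right_mono) simp
    then show ?thesis
      by (simp add: mult.commute)
  qed
  finally show ?case .
qed simp

lemma abs_resolvent_le:
  fixes b s t \<kappa> :: real
  assumes "\<kappa> > 0" and "\<kappa> * (1 + \<bar>t\<bar>) \<le> \<bar>b + s * t\<bar>"
  shows "\<bar>t / (b + s * t)\<bar> \<le> 1 / \<kappa>"
proof -
  have "\<kappa> * (1 + \<bar>t\<bar>) > 0"
    using assms(1) by (simp add: add_pos_nonneg)
  then have "\<bar>b + s * t\<bar> > 0"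
    using assms(2) by linarith
  moreover have "\<kappa> * \<bar>t\<bar> \<le> \<bar>b + s * t\<bar>"
    using assms by (simp add: distrib_left)
  ultimately show ?thesis
    using assms(1) by (simp add: abs_divide divide_simps mult.commute)
qed

lemma resolvent_lower_bound_perturb:
  fixes b s s0 t \<kappa> :: real
  assumes "\<kappa> \<ge> 0" and "\<kappa> * (1 + \<bar>t\<bar>) \<le> \<bar>b + s0 * t\<bar>" and "\<bar>s - s0\<bar> \<le> \<kappa> / 2"
  shows "\<kappa> / 2 * (1 + \<bar>t\<bar>) \<le> \<bar>b + s * t\<bar>"
proof -
  have "\<bar>(s - s0) * t\<bar> \<le> \<kappa> / 2 * \<bar>t\<bar>"
    unfolding abs_mult using assms(3) by (intro mult_right_mono) auto
  moreover have "\<bar>b + s * t\<bar> \<ge> \<bar>b + s0 * t\<bar> - \<bar>(s - s0) * t\<bar>"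
    using abs_triangle_ineq2[of "b + s0 * t" "(s0 - s) * t"] by (simp add: algebra_simps)
  ultimately show ?thesis
    using assms(1,2) mult_nonneg_nonneg[of \<kappa> "\<bar>t\<bar>"] by (simp add: algebra_simps)
qed

definition resolvent_moment :: "real measure \<Rightarrow> real \<Rightarrow> nat \<Rightarrow> real \<Rightarrow> real" where
  "resolvent_moment M b k s = (\<integral>t. (t / (b + s * t)) ^ k \<partial>M)"

lemma integrable_power_of_AE_bounded:
  fixes y :: "'a \<Rightarrow> real"
  assumes "finite_measure M" "y \<in> borel_measurable M" "AE t in M. \<bar>y t\<bar> \<le> B"
  shows "integrable M (\<lambda>t. y t ^ k)"
proof -
  interpret finite_measure M by fact
  show ?thesis
  proof (rule integrable_const_bound[where B = "B ^ k"])
    show "AE t in M. norm (y t ^ k) \<le> B ^ k"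
      using assms(3) by eventually_elim (simp add: power_abs power_mono)
  qed (use assms(2) in measurable)
qed

lemma integrable_resolvent_power:
  fixes M :: "real measure"
  assumes "finite_measure M" "sets M = sets borel"
    and "\<kappa> > 0" "AE t in M. \<kappa> * (1 + \<bar>t\<bar>) \<le> \<bar>b + s * t\<bar>"
  shows "integrable M (\<lambda>t. (t / (b + s * t)) ^ k)"
proof (rule integrable_power_of_AE_bounded[OF assms(1)])
  show "(\<lambda>t. t / (b + s * t)) \<in> borel_measurable M"
    by (subst measurable_cong_sets[OF assms(2) refl]) measurable
  show "AE t in M. \<bar>t / (b + s * t)\<bar> \<le> 1 / \<kappa>"
    using assms(4) by eventually_elim (rule abs_resolvent_le[OF assms(3)])
qed

lemma resolvent_power_remainder:
  fixes b s h t \<kappa> :: real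
  assumes "\<kappa> > 0" "\<kappa> * (1 + \<bar>t\<bar>) \<le> \<bar>b + s * t\<bar>" "\<bar>h\<bar> \<le> \<kappa> / 2"
  shows "\<bar>(t / (b + (s + h) * t)) ^ k - (t / (b + s * t)) ^ k + h * k * (t / (b + s * t)) ^ Suc k\<bar>
           \<le> 4 ^ k * (1 / \<kappa>) ^ (k + 2) * h\<^sup>2"
proof -
  define y where "y = t / (b + s * t)"
  have y: "\<bar>y\<bar> \<le> 1 / \<kappa>"
    unfolding y_def by (rule abs_resolvent_le[OF assms(1,2)])
  have hy: "\<bar>h * y\<bar> \<le> 1 / 2"
  proof -
    have "\<bar>h * y\<bar> \<le> \<kappa> / 2 * (1 / \<kappa>)"
      unfolding abs_mult using assms(3) y by (intro mult_mono) auto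
    then show ?thesis
      using assms(1) by simp
  qed
  have "\<kappa> * (1 + \<bar>t\<bar>) > 0"
    using assms(1) by (simp add: add_pos_nonneg)
  then have "b + s * t \<noteq> 0"
    using assms(2) by auto
  then have "b + (s + h) * t = (b + s * t) * (1 + h * y)"
    unfolding y_def by (simp add: field_simps)
  then have "t / (b + (s + h) * t) = y / (1 + h * y)"
    unfolding y_def by simp
  then have "(t / (b + (s + h) * t)) ^ k - y ^ k + h * k * y ^ Suc k
               = y ^ k * (1 / (1 + h * y) ^ k - 1 + k * (h * y))"
    by (simp add: power_divide algebra_simps)
  also have "\<bar>\<dots>\<bar> \<le> \<bar>y\<bar> ^ k * (4 ^ k * (h * y)\<^sup>2)"
    unfolding abs_mult power_abs
    by (intro mult_left_mono inverse_power_one_plus_remainder hy) simp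
  also have "\<dots> = 4 ^ k * \<bar>y\<bar> ^ (k + 2) * h\<^sup>2"
    by (simp add: power_mult_distrib power_add power2_eq_square mult_ac)
  also have "\<dots> \<le> 4 ^ k * (1 / \<kappa>) ^ (k + 2) * h\<^sup>2"
    using y by (intro mult_right_mono mult_left_mono power_mono) auto
  finally show ?thesis
    unfolding y_def .
qed

lemma resolvent_moment_remainder:
  fixes M :: "real measure"
  assumes M: "finite_measure M" "sets M = sets borel"
    and "\<kappa> > 0" and bound: "AE t in M. \<kappa> * (1 + \<bar>t\<bar>) \<le> \<bar>b + s * t\<bar>"
    and "\<bar>h\<bar> \<le> \<kappa> / 2"
  shows "\<bar>resolvent_moment M b k (s + h) - resolvent_moment M b k s + h * k * resolvent_moment M b (Suc k) s\<bar>
           \<le> 4 ^ k * (1 / \<kappa>) ^ (k + 2) * measure M (space M) * h\<^sup>2"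
proof -
  interpret finite_measure M by fact
  define R where "R t = (t / (b + (s + h) * t)) ^ k - (t / (b + s * t)) ^ k
                         + h * k * (t / (b + s * t)) ^ Suc k" for t
  have iz: "integrable M (\<lambda>t. (t / (b + (s + h) * t)) ^ k)"
  proof (rule integrable_resolvent_power[OF M])
    show "AE t in M. \<kappa> / 2 * (1 + \<bar>t\<bar>) \<le> \<bar>b + (s + h) * t\<bar>"
      using bound by eventually_elim (rule resolvent_lower_bound_perturb, use assms(3,5) in auto)
  qed (use assms(3) in simp)
  have iy: "integrable M (\<lambda>t. (t / (b + s * t)) ^ j)" for j
    by (rule integrable_resolvent_power[OF M assms(3) bound])
  have "resolvent_moment M b k (s + h) - resolvent_moment M b k s + h * k * resolvent_moment M b (Suc k) s
          = integral\<^sup>L M R"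
    unfolding R_def resolvent_moment_def using iz iy
    by (simp add: Bochner_Integration.integral_add Bochner_Integration.integral_diff
        integrable_mult_right del: power_Suc)
  also have "\<bar>integral\<^sup>L M R\<bar> \<le> (\<integral>t. \<bar>R t\<bar> \<partial>M)"
    using integral_norm_bound[of M R] by simp
  also have "\<dots> \<le> (\<integral>t. 4 ^ k * (1 / \<kappa>) ^ (k + 2) * h\<^sup>2 \<partial>M)"
  proof (rule integral_mono_AE)
    show "integrable M (\<lambda>t. \<bar>R t\<bar>)"
      unfolding R_def by (intro integrable_abs Bochner_Integration.integrable_add
          Bochner_Integration.integrable_diff integrable_mult_right iz iy)
    show "AE t in M. \<bar>R t\<bar> \<le> 4 ^ k * (1 / \<kappa>) ^ (k + 2) * h\<^sup>2"
      using bound unfolding R_def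
      by eventually_elim (rule resolvent_power_remainder, use assms(3,5) in auto)
  qed simp
  also have "\<dots> = 4 ^ k * (1 / \<kappa>) ^ (k + 2) * measure M (space M) * h\<^sup>2"
    by (simp add: mult_ac)
  finally show ?thesis .
qed

lemma has_real_derivative_resolvent_moment:
  fixes M :: "real measure"
  assumes M: "finite_measure M" "sets M = sets borel"
    and "\<kappa> > 0" and bound: "AE t in M. \<kappa> * (1 + \<bar>t\<bar>) \<le> \<bar>b + s0 * t\<bar>"
    and "\<bar>s - s0\<bar> < \<kappa> / 2"
  shows "(resolvent_moment M b k has_real_derivative - (k * resolvent_moment M b (Suc k) s)) (at s)"
proof (rule DERIV_of_quadratic_remainder)
  have bound_s: "AE t in M. \<kappa> / 2 * (1 + \<bar>t\<bar>) \<le> \<bar>b + s * t\<bar>"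
    using bound by eventually_elim (rule resolvent_lower_bound_perturb, use assms(3,5) in auto)
  fix h :: real
  assume "\<bar>h\<bar> < \<kappa> / 4"
  then have "\<bar>resolvent_moment M b k (s + h) - resolvent_moment M b k s + h * k * resolvent_moment M b (Suc k) s\<bar>
               \<le> 4 ^ k * (1 / (\<kappa> / 2)) ^ (k + 2) * measure M (space M) * h\<^sup>2"
    using assms(3) by (intro resolvent_moment_remainder[OF M _ bound_s]) auto
  then show "\<bar>resolvent_moment M b k (s + h) - resolvent_moment M b k s
               - h * - (k * resolvent_moment M b (Suc k) s)\<bar>
               \<le> 4 ^ k * (1 / (\<kappa> / 2)) ^ (k + 2) * measure M (space M) * h\<^sup>2"
    by simp
qed (use assms(3) in simp)

section \<open>Lower bounds on the denominators from the domains D\<close>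

lemma AE_in_msupp:
  fixes M :: "real measure"
  assumes "sets M = sets borel"
  shows "AE t in M. t \<in> msupp M"
proof -
  define F where "F = {ball x e | x e. e > 0 \<and> emeasure M (ball x e) = 0}"
  obtain F' where F': "F' \<subseteq> F" "countable F'" "\<Union>F' = \<Union>F"
    using Lindelof[of F] unfolding F_def by auto
  have "AE t in M. \<forall>B\<in>F'. t \<notin> B"
  proof (rule AE_ball_countable'[OF _ F'(2)])
    fix B
    assume "B \<in> F'"
    then obtain x e where "B = ball x e" "emeasure M (ball x e) = 0"
      using F'(1) unfolding F_def by auto
    then have "B \<in> null_sets M"
      using assms by (simp add: null_sets_def)
    then show "AE t in M. t \<notin> B"
      by (rule AE_not_in)
  qed
  moreover have "t \<in> msupp M" if "\<forall>B\<in>F'. t \<notin> B" for t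
  proof (rule ccontr)
    assume "t \<notin> msupp M"
    then obtain e where "e > 0" "emeasure M (ball t e) = 0"
      unfolding msupp_def by (auto simp: not_gr_zero)
    then have "t \<in> \<Union>F"
      unfolding F_def by force
    then show False
      using that F'(3) by auto
  qed
  ultimately show ?thesis
    by (auto elim: eventually_mono)
qed

lemma AE_not_in_ball_outside_msupp:
  fixes M :: "real measure"
  assumes "sets M = sets borel" and "x \<notin> msupp M"
  obtains e where "e > 0" and "AE t in M. t \<notin> ball x e"
proof -
  obtain e where "e > 0" "emeasure M (ball x e) = 0"
    using assms(2) unfolding msupp_def by (auto simp: not_gr_zero)
  moreover from this have "ball x e \<in> null_sets M"
    using assms(1) by (simp add: null_sets_def)
  ultimately show ?thesis
    using that AE_not_in by blast
qed

lemma affine_le_abs_diff_off_ball: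
  fixes p e t :: real
  assumes "p > 0" "e > 0" "t \<ge> 0" "\<bar>t - p\<bar> \<ge> e"
  shows "min (e / (1 + 2 * p)) (p / (2 * p + 1)) * (1 + t) \<le> \<bar>t - p\<bar>"
proof (cases "t \<le> 2 * p")
  case True
  have "min (e / (1 + 2 * p)) (p / (2 * p + 1)) * (1 + t) \<le> e / (1 + 2 * p) * (1 + 2 * p)"
    using assms True by (intro mult_mono) auto
  then show ?thesis
    using assms by simp
next
  case False
  have "p * (1 + t) \<le> (t - p) * (2 * p + 1)"
  proof -
    have "2 * p * (1 + p) \<le> t * (1 + p)"
      using False assms by (intro mult_right_mono) auto
    then show ?thesis
      by (simp add: algebra_simps)
  qed
  then have "p / (2 * p + 1) * (1 + t) \<le> t - p"
    using assms by (simp add: divide_le_eq mult.commute)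
  moreover have "min (e / (1 + 2 * p)) (p / (2 * p + 1)) * (1 + t) \<le> p / (2 * p + 1) * (1 + t)"
    using assms by (intro mult_right_mono) auto
  ultimately show ?thesis
    using False by linarith
qed

lemma Dset_imp_resolvent_lower_bound:
  fixes M :: "real measure"
  assumes "sets M = sets borel" and "AE t in M. 0 \<le> t" and "d \<in> Dset M"
  obtains \<kappa> where "\<kappa> > 0" and "AE t in M. \<kappa> * (1 + \<bar>t\<bar>) \<le> \<bar>1 + d * t\<bar>"
proof -
  consider "d = 0" "compact (msupp M)" | "d > 0" | "d < 0" "- inverse d \<notin> msupp M"
    using assms(3) unfolding Dset_def by (cases "d < 0") (auto split: if_splits)
  then show ?thesis
  proof cases
    case 1
    then obtain R where R: "\<And>x. x \<in> msupp M \<Longrightarrow> \<bar>x\<bar> \<le> R"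
      using compact_imp_bounded bounded_iff real_norm_def by metis
    have "AE t in M. 1 / (1 + \<bar>R\<bar>) * (1 + \<bar>t\<bar>) \<le> \<bar>1 + d * t\<bar>"
      using AE_in_msupp[OF assms(1)]
    proof eventually_elim
      case (elim t)
      then have "\<bar>t\<bar> \<le> \<bar>R\<bar>"
        using R by force
      then show ?case
        using 1 by (simp add: divide_le_eq add_pos_nonneg)
    qed
    then show ?thesis
      by (rule that[rotated]) (simp add: add_pos_nonneg)
  next
    case 2
    have "AE t in M. min 1 d * (1 + \<bar>t\<bar>) \<le> \<bar>1 + d * t\<bar>"
      using assms(2)
    proof eventually_elim
      case (elim t)
      then have "min 1 d * t \<le> d * t"
        by (intro mult_right_mono) auto
      then show ?case
        using elim 2 by (simp add: distrib_left)
    qed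
    then show ?thesis
      by (rule that[rotated]) (use 2 in simp)
  next
    case 3
    define p where "p = - inverse d"
    have p: "p > 0"
      unfolding p_def using 3 by simp
    obtain e where e: "e > 0" "AE t in M. t \<notin> ball p e"
      using AE_not_in_ball_outside_msupp[OF assms(1) 3(2)] unfolding p_def by blast
    define m where "m = min (e / (1 + 2 * p)) (p / (2 * p + 1))"
    have "AE t in M. (\<bar>d\<bar> * m) * (1 + \<bar>t\<bar>) \<le> \<bar>1 + d * t\<bar>"
      using assms(2) e(2)
    proof eventually_elim
      case (elim t)
      then have "m * (1 + t) \<le> \<bar>t - p\<bar>"
        unfolding m_def using p e(1)
        by (intro affine_le_abs_diff_off_ball) (auto simp: dist_real_def abs_minus_commute)
      moreover have "1 + d * t = d * (t - p)"
        unfolding p_def using 3 by (simp add: field_simps)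
      ultimately show ?case
        using elim by (simp add: abs_mult mult_left_mono mult.assoc)
    qed
    moreover have "\<bar>d\<bar> * m > 0"
      unfolding m_def using 3 p e by (intro mult_pos_pos) auto
    ultimately show ?thesis
      using that by blast
  qed
qed

section \<open>The moment inequality\<close>

lemma integral_power2_mult_affine_power2:
  fixes y :: "'a \<Rightarrow> real"
  assumes iy: "\<And>k. integrable M (\<lambda>t. y t ^ k)"
  shows "integrable M (\<lambda>t. (y t)\<^sup>2 * (\<alpha> * y t - \<beta>)\<^sup>2)"
    and "(\<integral>t. (y t)\<^sup>2 * (\<alpha> * y t - \<beta>)\<^sup>2 \<partial>M)
           = \<alpha>\<^sup>2 * (\<integral>t. y t ^ 4 \<partial>M) - 2 * \<alpha> * \<beta> * (\<integral>t. y t ^ 3 \<partial>M) + \<beta>\<^sup>2 * (\<integral>t. y t ^ 2 \<partial>M)"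
proof -
  have expand: "(\<lambda>t. (y t)\<^sup>2 * (\<alpha> * y t - \<beta>)\<^sup>2)
                  = (\<lambda>t. \<alpha>\<^sup>2 * y t ^ 4 - 2 * \<alpha> * \<beta> * y t ^ 3 + \<beta>\<^sup>2 * y t ^ 2)"
    by (simp add: fun_eq_iff power2_eq_square eval_nat_numeral algebra_simps)
  show "integrable M (\<lambda>t. (y t)\<^sup>2 * (\<alpha> * y t - \<beta>)\<^sup>2)"
    unfolding expand by (intro Bochner_Integration.integrable_add Bochner_Integration.integrable_diff
        integrable_mult_right iy)
  show "(\<integral>t. (y t)\<^sup>2 * (\<alpha> * y t - \<beta>)\<^sup>2 \<partial>M)
           = \<alpha>\<^sup>2 * (\<integral>t. y t ^ 4 \<partial>M) - 2 * \<alpha> * \<beta> * (\<integral>t. y t ^ 3 \<partial>M) + \<beta>\<^sup>2 * (\<integral>t. y t ^ 2 \<partial>M)"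
    unfolding expand using iy
    by (simp add: Bochner_Integration.integral_add Bochner_Integration.integral_diff)
qed

lemma AE_mult_affine_eq_0_of_integral:
  fixes y :: "'a \<Rightarrow> real"
  assumes "\<And>k. integrable M (\<lambda>t. y t ^ k)"
    and "(\<integral>t. (y t)\<^sup>2 * (\<alpha> * y t - \<beta>)\<^sup>2 \<partial>M) = 0"
  shows "AE t in M. y t * (\<alpha> * y t - \<beta>) = 0"
proof -
  have "AE t in M. (y t)\<^sup>2 * (\<alpha> * y t - \<beta>)\<^sup>2 = 0"
    using integral_nonneg_eq_0_iff_AE[OF integral_power2_mult_affine_power2(1)[OF assms(1)]] assms(2)
    by simp
  then show ?thesis
    by eventually_elim simp
qed

lemma moment_relation_of_integral_eq_0:
  fixes y :: "'a \<Rightarrow> real"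
  assumes iy: "\<And>k. integrable M (\<lambda>t. y t ^ k)"
    and "(\<integral>t. (y t)\<^sup>2 * (\<alpha> * y t - \<beta>)\<^sup>2 \<partial>M) = 0"
  shows "\<alpha> * (\<integral>t. y t ^ 2 \<partial>M) = \<beta> * (\<integral>t. y t \<partial>M)"
proof -
  have "(\<integral>t. \<alpha> * y t ^ 2 - \<beta> * y t \<partial>M) = 0"
    using AE_mult_affine_eq_0_of_integral[OF assms]
    by (intro integral_eq_zero_AE) (auto elim!: eventually_mono simp: power2_eq_square algebra_simps)
  then show ?thesis
    using iy[of 1] iy[of 2] by (simp add: Bochner_Integration.integral_diff)
qed

lemma moment_system_inconsistent:
  fixes M :: "'a measure" and N :: "'b measure" and x :: "'a \<Rightarrow> real" and y :: "'b \<Rightarrow> real"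
  defines "q k \<equiv> \<integral>t. x t ^ k \<partial>M" and "p k \<equiv> \<integral>t. y t ^ k \<partial>N"
  assumes ix: "\<And>k. integrable M (\<lambda>t. x t ^ k)" and iy: "\<And>k. integrable N (\<lambda>t. y t ^ k)"
    and x_ne: "\<And>t. d * x t \<noteq> 1"
    and eq0: "p 1 = d" and eq1: "c * p 2 * q 2 = 1"
    and eq3: "c\<^sup>2 * p 4 * (q 2) ^ 3 - 2 * c * p 3 * q 2 * q 3 + p 2 * q 4 = 0"
  shows False
proof -
  have "p 2 \<ge> 0" "q 2 \<ge> 0"
    unfolding p_def q_def by (simp_all add: integral_nonneg_AE)
  with eq1 have p2: "p 2 > 0" and q2: "q 2 > 0"
    by (auto simp: order.order_iff_strict)
  define A where "A = (\<integral>t. (y t)\<^sup>2 * (c * (q 2)\<^sup>2 * y t - q 3)\<^sup>2 \<partial>N)"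
  define B where "B = (\<integral>t. (x t)\<^sup>2 * (q 2 * x t - q 3)\<^sup>2 \<partial>M)"
  have "A \<ge> 0" "B \<ge> 0"
    unfolding A_def B_def by (simp_all add: integral_nonneg_AE)
  moreover have "A * q 2 + B * p 2 = (q 2)\<^sup>2 * (c\<^sup>2 * p 4 * (q 2) ^ 3 - 2 * c * p 3 * q 2 * q 3 + p 2 * q 4)"
    unfolding A_def B_def integral_power2_mult_affine_power2(2)[OF ix] integral_power2_mult_affine_power2(2)[OF iy]
    by (simp add: p_def q_def power2_eq_square eval_nat_numeral algebra_simps)
  ultimately have "A = 0" "B = 0"
    using eq3 p2 q2 by (simp_all add: add_nonneg_eq_0_iff)
  have "c * (q 2)\<^sup>2 * p 2 = q 3 * p 1"
    using moment_relation_of_integral_eq_0[OF iy \<open>A = 0\<close>[unfolded A_def]] unfolding p_def by simp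
  moreover have "c * (q 2)\<^sup>2 * p 2 = (c * p 2 * q 2) * q 2"
    by (simp add: power2_eq_square mult_ac)
  ultimately have q2_eq: "q 2 = q 3 * d"
    using eq0 eq1 by simp
  then have "q 3 \<noteq> 0"
    using q2 by auto
  have "AE t in M. x t * (q 2 * x t - q 3) = 0"
    by (rule AE_mult_affine_eq_0_of_integral[OF ix \<open>B = 0\<close>[unfolded B_def]])
  then have "AE t in M. x t = 0"
  proof eventually_elim
    case (elim t)
    moreover have "q 2 * x t - q 3 = q 3 * (d * x t - 1)"
      unfolding q2_eq by (simp add: algebra_simps)
    ultimately show ?case
      using \<open>q 3 \<noteq> 0\<close> x_ne[of t] by simp
  qed
  then have "q 2 = 0"
    unfolding q_def by (intro integral_eq_zero_AE) (auto elim!: eventually_mono)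
  then show False
    using q2 by simp
qed

section \<open>Derivatives of F in terms of resolvent moments\<close>

lemma deriv_moment_composition:
  fixes P Q :: "nat \<Rightarrow> real \<Rightarrow> real" and U :: "real set"
  assumes U: "open U" "\<delta> \<in> U"
    and dQ: "\<And>d k. d \<in> U \<Longrightarrow> (Q k has_real_derivative - (k * Q (Suc k) d)) (at d)"
    and dP: "\<And>d k. d \<in> U \<Longrightarrow>
               (P k has_real_derivative - (k * P (Suc k) (c * Q 1 d))) (at (c * Q 1 d))"
  defines "F \<equiv> \<lambda>d. P 1 (c * Q 1 d) - d"
  shows "deriv F \<delta> = c * P 2 (c * Q 1 \<delta>) * Q 2 \<delta> - 1"
    and "(deriv ^^ 3) F \<delta> = 6 * c * (c\<^sup>2 * P 4 (c * Q 1 \<delta>) * (Q 2 \<delta>) ^ 3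
                            - 2 * c * P 3 (c * Q 1 \<delta>) * Q 2 \<delta> * Q 3 \<delta> + P 2 (c * Q 1 \<delta>) * Q 4 \<delta>)"
proof -
  define R where "R k d = P k (c * Q 1 d)" for k d
  have dR: "(R k has_real_derivative k * c * R (Suc k) d * Q 2 d) (at d)" if "d \<in> U" for k d
    using DERIV_chain2[OF dP[OF that] DERIV_cmult[OF dQ[OF that, of 1]]]
    unfolding R_def by (simp add: numeral_2_eq_2 algebra_simps)
  define F1 where "F1 d = c * R 2 d * Q 2 d - 1" for d
  define F2 where "F2 d = 2 * c\<^sup>2 * R 3 d * (Q 2 d)\<^sup>2 - 2 * c * R 2 d * Q 3 d" for d
  define F3 where "F3 d = 6 * c ^ 3 * R 4 d * (Q 2 d) ^ 3 - 12 * c\<^sup>2 * R 3 d * Q 2 d * Q 3 d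
                            + 6 * c * R 2 d * Q 4 d" for d
  have "(F has_real_derivative F1 d) (at d)" if "d \<in> U" for d
    using DERIV_diff[OF dR[OF that, of 1] DERIV_ident]
    unfolding F_def F1_def R_def by (simp add: eval_nat_numeral)
  then have deriv1: "deriv F d = F1 d" if "d \<in> U" for d
    using that DERIV_imp_deriv by blast
  have dF1: "(F1 has_real_derivative F2 d) (at d)" if "d \<in> U" for d
    using DERIV_diff[OF DERIV_mult[OF DERIV_cmult[OF dR[OF that, of 2], where c = c] dQ[OF that, of 2]] DERIV_const]
    unfolding F1_def F2_def by (simp add: eval_nat_numeral algebra_simps)
  have deriv2: "(deriv ^^ 2) F d = F2 d" if "d \<in> U" for d
  proof -
    have "(deriv ^^ 2) F d = deriv F1 d"
      using deriv_cong_ev[OF eventually_mono[OF eventually_nhds_in_open[OF U(1) that] deriv1] refl]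
      by (simp add: numeral_2_eq_2)
    also have "\<dots> = F2 d"
      by (rule DERIV_imp_deriv[OF dF1[OF that]])
    finally show ?thesis .
  qed
  have dF2: "(F2 has_real_derivative F3 \<delta>) (at \<delta>)"
  proof -
    have "((\<lambda>d. (Q 2 d)\<^sup>2) has_real_derivative 2 * Q 2 \<delta> * - (2 * Q 3 \<delta>)) (at \<delta>)"
      using DERIV_power[OF dQ[OF U(2), of 2], of 2] by (simp add: eval_nat_numeral mult_ac)
    from DERIV_diff[OF DERIV_mult[OF DERIV_cmult[OF dR[OF U(2), of 3], where c = "2 * c\<^sup>2"] this]
        DERIV_mult[OF DERIV_cmult[OF dR[OF U(2), of 2], where c = "2 * c"] dQ[OF U(2), of 3]]]
    show ?thesis
      unfolding F2_def[abs_def]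
      by (rule DERIV_cong) (simp add: F3_def power2_eq_square power3_eq_cube algebra_simps)
  qed
  have "(deriv ^^ 3) F \<delta> = deriv F2 \<delta>"
    using deriv_cong_ev[OF eventually_mono[OF eventually_nhds_in_open[OF U] deriv2] refl]
    by (simp add: numeral_3_eq_3 numeral_2_eq_2)
  also have "\<dots> = F3 \<delta>"
    by (rule DERIV_imp_deriv[OF dF2])
  also have "F3 \<delta> = 6 * c * (c\<^sup>2 * P 4 (c * Q 1 \<delta>) * (Q 2 \<delta>) ^ 3
                   - 2 * c * P 3 (c * Q 1 \<delta>) * Q 2 \<delta> * Q 3 \<delta> + P 2 (c * Q 1 \<delta>) * Q 4 \<delta>)"
    unfolding F3_def R_def by (simp add: power2_eq_square power3_eq_cube algebra_simps)
  finally show "(deriv ^^ 3) F \<delta> = 6 * c * (c\<^sup>2 * P 4 (c * Q 1 \<delta>) * (Q 2 \<delta>) ^ 3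
                   - 2 * c * P 3 (c * Q 1 \<delta>) * Q 2 \<delta> * Q 3 \<delta> + P 2 (c * Q 1 \<delta>) * Q 4 \<delta>)" .
  show "deriv F \<delta> = c * P 2 (c * Q 1 \<delta>) * Q 2 \<delta> - 1"
    using deriv1[OF U(2)] unfolding F1_def R_def .
qed

lemma deriv_moment_composition_near:
  fixes P Q :: "nat \<Rightarrow> real \<Rightarrow> real"
  assumes "r > 0" "\<rho> > 0"
    and dQ: "\<And>d k. \<bar>d - \<delta>\<bar> < r \<Longrightarrow> (Q k has_real_derivative - (k * Q (Suc k) d)) (at d)"
    and dP: "\<And>s k. \<bar>s - c * Q 1 \<delta>\<bar> < \<rho> \<Longrightarrow> (P k has_real_derivative - (k * P (Suc k) s)) (at s)"
  shows "deriv (\<lambda>d. P 1 (c * Q 1 d) - d) \<delta> = c * P 2 (c * Q 1 \<delta>) * Q 2 \<delta> - 1"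
    and "(deriv ^^ 3) (\<lambda>d. P 1 (c * Q 1 d) - d) \<delta>
           = 6 * c * (c\<^sup>2 * P 4 (c * Q 1 \<delta>) * (Q 2 \<delta>) ^ 3
                      - 2 * c * P 3 (c * Q 1 \<delta>) * Q 2 \<delta> * Q 3 \<delta> + P 2 (c * Q 1 \<delta>) * Q 4 \<delta>)"
proof -
  have "isCont (\<lambda>d. c * Q 1 d) \<delta>"
    using DERIV_isCont[OF dQ[of \<delta> 1]] assms(1) by (simp add: continuous_mult)
  then obtain r' where "r' > 0" and r': "\<And>d. dist d \<delta> < r' \<Longrightarrow> dist (c * Q 1 d) (c * Q 1 \<delta>) < \<rho>"
    using assms(2) unfolding continuous_at_eps_delta by blast
  define U where "U = ball \<delta> (min r r')"
  have U: "open U" "\<delta> \<in> U"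
    unfolding U_def using assms(1) \<open>r' > 0\<close> by auto
  have "\<bar>d - \<delta>\<bar> < r" and "\<bar>c * Q 1 d - c * Q 1 \<delta>\<bar> < \<rho>" if "d \<in> U" for d
    using that r'[of d] unfolding U_def by (auto simp: dist_real_def abs_minus_commute)
  then show "deriv (\<lambda>d. P 1 (c * Q 1 d) - d) \<delta> = c * P 2 (c * Q 1 \<delta>) * Q 2 \<delta> - 1"
    and "(deriv ^^ 3) (\<lambda>d. P 1 (c * Q 1 d) - d) \<delta>
           = 6 * c * (c\<^sup>2 * P 4 (c * Q 1 \<delta>) * (Q 2 \<delta>) ^ 3
                      - 2 * c * P 3 (c * Q 1 \<delta>) * Q 2 \<delta> * Q 3 \<delta> + P 2 (c * Q 1 \<delta>) * Q 4 \<delta>)"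
    using deriv_moment_composition[OF U, of Q P c] dQ dP by auto
qed

lemma Fmap_eq_resolvent_moments:
  "Fmap c nu nt d x = resolvent_moment nt (- x) 1 (c * resolvent_moment nu 1 1 d) - d"
  unfolding Fmap_def resolvent_moment_def by (simp add: mult_ac)

lemma scaled_resolvent_moment:
  fixes M :: "real measure"
  assumes "a \<noteq> 0"
  shows "- a * (c * (\<integral>t. t / (- a * (1 + d * t)) \<partial>M)) = c * resolvent_moment M 1 1 d"
proof -
  have "(\<integral>t. t / (- a * (1 + d * t)) \<partial>M) = (\<integral>t. (t / (1 + d * t)) ^ 1 / (- a) \<partial>M)"
    by (simp add: mult.commute)
  also have "\<dots> = resolvent_moment M 1 1 d / (- a)"
    unfolding resolvent_moment_def by (rule integral_divide_zero)
  finally show ?thesis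
    using assms by simp
qed

lemma AE_resolvent_lower_bound_scale:
  fixes M :: "real measure"
  assumes "AE t in M. \<kappa> * (1 + \<bar>t\<bar>) \<le> \<bar>1 + d * t\<bar>"
  shows "AE t in M. \<bar>a\<bar> * \<kappa> * (1 + \<bar>t\<bar>) \<le> \<bar>- a + (- a * d) * t\<bar>"
  using assms
proof eventually_elim
  case (elim t)
  have "\<bar>- a + (- a * d) * t\<bar> = \<bar>a\<bar> * \<bar>1 + d * t\<bar>"
    by (simp add: abs_mult[symmetric] algebra_simps)
  then show ?case
    using elim by (simp add: mult.assoc mult_left_mono)
qed

lemma mult_resolvent_neq_1: "d * (t / (1 + d * t)) \<noteq> (1 :: real)"
  by (cases "1 + d * t = 0") (auto simp: field_simps)

lemma resolvent_moment_expansion_of_Fmap: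
  fixes nu nt :: "real measure"
  assumes nu: "prob_Rplus nu" and nt: "prob_Rplus nt" and "\<delta> \<in> Dset nu" and "a \<noteq> 0"
    and "c * (\<integral>t. t / (- a * (1 + \<delta> * t)) \<partial>nu) \<in> Dset nt"
  defines "Q \<equiv> resolvent_moment nu 1" and "P \<equiv> resolvent_moment nt (- a)"
  shows "Fmap c nu nt \<delta> a = P 1 (c * Q 1 \<delta>) - \<delta>"
    and "deriv (\<lambda>d. Fmap c nu nt d a) \<delta> = c * P 2 (c * Q 1 \<delta>) * Q 2 \<delta> - 1"
    and "(deriv ^^ 3) (\<lambda>d. Fmap c nu nt d a) \<delta>
           = 6 * c * (c\<^sup>2 * P 4 (c * Q 1 \<delta>) * (Q 2 \<delta>) ^ 3
                      - 2 * c * P 3 (c * Q 1 \<delta>) * Q 2 \<delta> * Q 3 \<delta> + P 2 (c * Q 1 \<delta>) * Q 4 \<delta>)"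
    and "integrable nu (\<lambda>t. (t / (1 + \<delta> * t)) ^ k)"
    and "integrable nt (\<lambda>t. (t / (- a + c * Q 1 \<delta> * t)) ^ k)"
proof -
  have nu: "finite_measure nu" "sets nu = sets borel" "AE t in nu. 0 \<le> t"
    and nt: "finite_measure nt" "sets nt = sets borel" "AE t in nt. 0 \<le> t"
    using nu nt unfolding prob_Rplus_def prob_space_def by auto
  obtain \<kappa>1 where \<kappa>1: "\<kappa>1 > 0" "AE t in nu. \<kappa>1 * (1 + \<bar>t\<bar>) \<le> \<bar>1 + \<delta> * t\<bar>"
    using Dset_imp_resolvent_lower_bound[OF nu(2,3) assms(3)] by blast
  obtain \<kappa>0 where "\<kappa>0 > 0"
    and \<kappa>0: "AE t in nt. \<kappa>0 * (1 + \<bar>t\<bar>) \<le> \<bar>1 + c * (\<integral>t. t / (- a * (1 + \<delta> * t)) \<partial>nu) * t\<bar>"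
    using Dset_imp_resolvent_lower_bound[OF nt(2,3) assms(5)] by blast
  have "- a * (c * (\<integral>t. t / (- a * (1 + \<delta> * t)) \<partial>nu)) = c * Q 1 \<delta>"
    unfolding Q_def by (rule scaled_resolvent_moment[OF assms(4)])
  note \<kappa>2 = AE_resolvent_lower_bound_scale[OF \<kappa>0, of a, unfolded this]
  have \<kappa>2_pos: "\<bar>a\<bar> * \<kappa>0 > 0"
    using \<open>\<kappa>0 > 0\<close> assms(4) by simp
  have dQ: "(Q k has_real_derivative - (k * Q (Suc k) d)) (at d)" if "\<bar>d - \<delta>\<bar> < \<kappa>1 / 2" for d k
    unfolding Q_def using that by (rule has_real_derivative_resolvent_moment[OF nu(1,2) \<kappa>1])
  have dP: "(P k has_real_derivative - (k * P (Suc k) s)) (at s)"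
    if "\<bar>s - c * Q 1 \<delta>\<bar> < \<bar>a\<bar> * \<kappa>0 / 2" for s k
    unfolding P_def using that by (rule has_real_derivative_resolvent_moment[OF nt(1,2) \<kappa>2_pos \<kappa>2])
  have F: "(\<lambda>d. Fmap c nu nt d a) = (\<lambda>d. P 1 (c * Q 1 d) - d)"
    unfolding P_def Q_def Fmap_eq_resolvent_moments ..
  show "Fmap c nu nt \<delta> a = P 1 (c * Q 1 \<delta>) - \<delta>"
    using fun_cong[OF F] .
  show "deriv (\<lambda>d. Fmap c nu nt d a) \<delta> = c * P 2 (c * Q 1 \<delta>) * Q 2 \<delta> - 1"
    and "(deriv ^^ 3) (\<lambda>d. Fmap c nu nt d a) \<delta>
           = 6 * c * (c\<^sup>2 * P 4 (c * Q 1 \<delta>) * (Q 2 \<delta>) ^ 3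
                      - 2 * c * P 3 (c * Q 1 \<delta>) * Q 2 \<delta> * Q 3 \<delta> + P 2 (c * Q 1 \<delta>) * Q 4 \<delta>)"
    unfolding F using deriv_moment_composition_near[where r = "\<kappa>1 / 2" and \<rho> = "\<bar>a\<bar> * \<kappa>0 / 2"
        and \<delta> = \<delta> and c = c, OF _ _ dQ dP] \<kappa>1(1) \<kappa>2_pos by simp_all
  show "integrable nu (\<lambda>t. (t / (1 + \<delta> * t)) ^ k)"
    by (rule integrable_resolvent_power[OF nu(1,2) \<kappa>1])
  show "integrable nt (\<lambda>t. (t / (- a + c * Q 1 \<delta> * t)) ^ k)"
    by (rule integrable_resolvent_power[OF nt(1,2) \<kappa>2_pos \<kappa>2])
qed

theorem lemma3p14:
  fixes c a dta :: real and nu nt :: "real measure"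
  assumes "c > 0"
    and "prob_Rplus nu" and "prob_Rplus nt"
    and "nu \<noteq> return borel 0" and "nt \<noteq> return borel 0"
    and "\<not> (\<exists>x. nu = return borel x) \<or> \<not> (\<exists>x. nt = return borel x)"
    and "dta \<in> Dset nu" and "a \<noteq> 0"
    and "c * (\<integral>t. t / (- a * (1 + dta * t)) \<partial>nu) \<in> Dset nt"
    and "Fmap c nu nt dta a = 0"
    and "deriv (\<lambda>d. Fmap c nu nt d a) dta = 0"
  shows "(deriv ^^ 2) (\<lambda>d. Fmap c nu nt d a) dta = 0 \<longrightarrow>
         (deriv ^^ 3) (\<lambda>d. Fmap c nu nt d a) dta \<noteq> 0"
proof (intro impI notI)
  define Q where "Q = resolvent_moment nu 1"
  define P where "P = resolvent_moment nt (- a)"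
  define s where "s = c * Q 1 dta"
  note expansion = resolvent_moment_expansion_of_Fmap[OF assms(2,3,7,8,9), folded Q_def P_def, folded s_def]
  assume F3: "(deriv ^^ 3) (\<lambda>d. Fmap c nu nt d a) dta = 0"
  have "P 1 s = dta"
    using assms(10) expansion(1) by simp
  moreover have "c * P 2 s * Q 2 dta = 1"
    using assms(11) expansion(2) by simp
  moreover have "c\<^sup>2 * P 4 s * (Q 2 dta) ^ 3 - 2 * c * P 3 s * Q 2 dta * Q 3 dta + P 2 s * Q 4 dta = 0"
    using F3 expansion(3) assms(1) by simp
  ultimately show False
    unfolding P_def Q_def resolvent_moment_def
    by (rule moment_system_inconsistent[OF expansion(4,5) mult_resolvent_neq_1])
qed

end
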